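(* Let $\Sigma$ be a non-pure shellable rational pointed fan in $\mathbb{R}^d$ with non-pure shelling $C_1,\dots,C_s$. Then there exists a permutation $\sigma$ of $\{1,\dots,s\}$ such that $C_{\sigma(1)},\dots,C_{\sigma(s)}$ is a non-pure shelling of $\Sigma$ and $\dim C_{\sigma(1)}\ge\dots\ge\dim C_{\sigma(s)}$.
   Context: A rational pointed fan $\Sigma$ in $\mathbb{R}^d$ is a finite collection of rational pointed polyhedral cones closed under taking faces, such that the intersection of two cones of $\Sigma$ is a common face of both. Facets are maximal cones. For a cone $C$, $\mathrm{fan}(C)$ is the fan of all faces of $C$ and $\mathrm{fan}(\partial C)$ the fan of all proper faces of $C$. A shelling of a pure $k$-dimensional fan is a linear ordering $C_1,\dots,C_s$ of its facets such that either $k=0$, or: (1) $\mathrm{fan}(\partial C_1)$ has a shelling, and (2) for $1<j\le s$ the fan $\mathrm{fan}(\partial C_j)$ is pure $(k-1)$-dimensional and there is a shelling $D_1,\dots,D_{t_j}$ of $\mathrm{fan}(\partial C_j)$ with $\emptyset\neq\bigcup_{i=1}^{j-1}[\mathrm{fan}(C_i)\cap\mathrm{fan}(C_j)]=\bigcup_{l=1}^{r_j}\mathrm{fan}(D_l)$ for some $1\le r_j\le t_j$. A (not necessarily pure) fan $\Sigma$ is non-pure shellable if there is a linear ordering $C_1,\dots,C_s$ of its facets (a non-pure shelling) such that either $\dim\Sigma=0$, or: (1) $\mathrm{fan}(\partial C_1)$ has a shelling, and (2) for $1<j\le s$ there is a shelling $D_1,\dots,D_{t_j}$ of the pure fan $\mathrm{fan}(\partial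 C_j)$ with $\emptyset\neq\bigcup_{i=1}^{j-1}[\mathrm{fan}(C_i)\cap\mathrm{fan}(C_j)]=\bigcup_{l=1}^{r_j}\mathrm{fan}(D_l)$ for some $1\le r_j\le t_j$. *)

theory Defs
  imports "HOL-Analysis.Analysis" "HOL-Combinatorics.Permutations"
begin

definition rational_pointed_cone :: "(real ^ 'd) set \<Rightarrow> bool" where
  "rational_pointed_cone C \<longleftrightarrow>
     (\<exists>S. finite S \<and> (\<forall>v\<in>S. \<forall>i. v $ i \<in> \<rat>) \<and> C = convex_cone hull S)
     \<and> (\<forall>x. x \<in> C \<and> - x \<in> C \<longrightarrow> x = 0)"

definition cone_face :: "(real ^ 'd) set \<Rightarrow> (real ^ 'd) set \<Rightarrow> bool" where
  "cone_face F C \<longleftrightarrow> F face_of C \<and> F \<noteq> {}"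

definition fan_of :: "(real ^ 'd) set \<Rightarrow> (real ^ 'd) set set" where
  "fan_of C = {F. cone_face F C}"

definition fan_bd :: "(real ^ 'd) set \<Rightarrow> (real ^ 'd) set set" where
  "fan_bd C = {F. cone_face F C \<and> F \<noteq> C}"

definition rational_pointed_fan :: "(real ^ 'd) set set \<Rightarrow> bool" where
  "rational_pointed_fan \<Sigma> \<longleftrightarrow>
     finite \<Sigma> \<and> (\<forall>C\<in>\<Sigma>. rational_pointed_cone C)
     \<and> (\<forall>C\<in>\<Sigma>. \<forall>F. cone_face F C \<longrightarrow> F \<in> \<Sigma>)
     \<and> (\<forall>C\<in>\<Sigma>. \<forall>C'\<in>\<Sigma>. cone_face (C \<inter> C') C \<and> cone_face (C \<inter> C') C')"

definition facets :: "(real ^ 'd) set set \<Rightarrow> (real ^ 'd) set set" where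
  "facets \<Sigma> = {C\<in>\<Sigma>. \<forall>C'\<in>\<Sigma>. C \<subseteq> C' \<longrightarrow> C' = C}"

definition pure_fan :: "nat \<Rightarrow> (real ^ 'd) set set \<Rightarrow> bool" where
  "pure_fan k \<Sigma> \<longleftrightarrow> (\<forall>C\<in>facets \<Sigma>. aff_dim C = int k)"

definition fan_dim :: "(real ^ 'd) set set \<Rightarrow> int" where
  "fan_dim \<Sigma> = Max (aff_dim ` \<Sigma>)"

definition facet_ordering :: "(real ^ 'd) set set \<Rightarrow> (real ^ 'd) set list \<Rightarrow> bool" where
  "facet_ordering \<Sigma> L \<longleftrightarrow> distinct L \<and> set L = facets \<Sigma>"

text \<open>The union over i<j of fan(C_i) \<inter> fan(C_j) (0-based indices).\<close>

definition shared :: "(real ^ 'd) set list \<Rightarrow> nat \<Rightarrow> (real ^ 'd) set set" where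
  "shared L j = (\<Union>i<j. fan_of (L ! i) \<inter> fan_of (L ! j))"

fun is_shelling :: "nat \<Rightarrow> (real ^ 'd) set set \<Rightarrow> (real ^ 'd) set list \<Rightarrow> bool" where
  "is_shelling 0 \<Sigma> L \<longleftrightarrow> pure_fan 0 \<Sigma> \<and> facet_ordering \<Sigma> L"
| "is_shelling (Suc k) \<Sigma> L \<longleftrightarrow> pure_fan (Suc k) \<Sigma> \<and> facet_ordering \<Sigma> L \<and> L \<noteq> []
     \<and> (\<exists>D. is_shelling k (fan_bd (L ! 0)) D)
     \<and> (\<forall>j. 0 < j \<and> j < length L \<longrightarrow>
          (\<exists>D r. is_shelling k (fan_bd (L ! j)) D \<and> 1 \<le> r \<and> r \<le> length D
                 \<and> shared L j \<noteq> {} \<and> shared L j = (\<Union>l<r. fan_of (D ! l))))"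

definition nonpure_shelling :: "(real ^ 'd) set set \<Rightarrow> (real ^ 'd) set list \<Rightarrow> bool" where
  "nonpure_shelling \<Sigma> L \<longleftrightarrow> facet_ordering \<Sigma> L \<and>
     (fan_dim \<Sigma> = 0 \<or>
      (L \<noteq> [] \<and> (\<exists>k D. is_shelling k (fan_bd (L ! 0)) D)
       \<and> (\<forall>j. 0 < j \<and> j < length L \<longrightarrow>
          (\<exists>k D r. is_shelling k (fan_bd (L ! j)) D \<and> 1 \<le> r \<and> r \<le> length D
                 \<and> shared L j \<noteq> {} \<and> shared L j = (\<Union>l<r. fan_of (D ! l))))))"

definition nonpure_shellable :: "(real ^ 'd) set set \<Rightarrow> bool" where
  "nonpure_shellable \<Sigma> \<longleftrightarrow> (\<exists>L. nonpure_shelling \<Sigma> L)"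

end

(* Bubble sort. If dim C_j < dim C_(j+1) in a non-pure shelling, then C_j \<inter> C_(j+1) lies in
   a facet G of C_(j+1) from the initial segment of the boundary shelling of C_(j+1), and G is
   a face of some earlier C_i. Since dim G = dim C_(j+1) - 1 \<ge> dim C_j and G is not C_j, we
   get i < j, so every common face of C_j and C_(j+1) is already a face of C_i. Hence
   exchanging C_j and C_(j+1) leaves the complexes along which the cones attach unchanged,
   and the exchange is again a non-pure shelling. *)

theory Submission
  imports Defs "HOL-Library.List_Lexorder"
begin

lemma list_less_if_first_difference:
  fixes xs ys :: "'a::order list"
  assumes "i < length xs" "i < length ys" "take i xs = take i ys" "xs ! i < ys ! i"
  shows "xs < ys"
  using assms by (auto simp: list_less_def lexord_take_index_conv)

lemma sortable_by_adjacent_swaps: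
  fixes f :: "'a \<Rightarrow> 'b::linorder"
  assumes "P xs"
    and swap: "\<And>ys j. P ys \<Longrightarrow> Suc j < length ys \<Longrightarrow> f (ys ! j) < f (ys ! Suc j)
                 \<Longrightarrow> P (ys[j := ys ! Suc j, Suc j := ys ! j])"
  obtains ys where "P ys" "mset ys = mset xs" "sorted_wrt (\<ge>) (map f ys)"
proof -
  \<comment> \<open>A rearrangement whose key sequence is lexicographically maximal has no ascent.\<close>
  define S where "S = {ys. P ys \<and> mset ys = mset xs}"
  have "finite (map f ` S)"
    using mset_eq_finite[of xs] by (auto simp: S_def intro: finite_subset)
  moreover have "xs \<in> S"
    using assms(1) by (simp add: S_def)
  ultimately have "Max (map f ` S) \<in> map f ` S"
    by (intro Max_in) auto
  then obtain ys where ys: "ys \<in> S" "map f ys = Max (map f ` S)"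
    by auto
  have "f (ys ! Suc j) \<le> f (ys ! j)" if j: "Suc j < length ys" for j
  proof (rule ccontr)
    assume "\<not> f (ys ! Suc j) \<le> f (ys ! j)"
    then have asc: "f (ys ! j) < f (ys ! Suc j)" by simp
    define zs where "zs = ys[j := ys ! Suc j, Suc j := ys ! j]"
    have "zs \<in> S"
      using ys(1) swap[OF _ j asc] mset_swap[of "Suc j" ys j] j
      by (simp add: S_def zs_def list_update_swap)
    then have "map f zs \<le> map f ys"
      using \<open>finite (map f ` S)\<close> ys(2) by simp
    moreover have "map f ys < map f zs"
      using j asc by (intro list_less_if_first_difference[of j])
        (simp_all add: zs_def take_map take_update_swap list_update_beyond)
    ultimately show False by simp
  qed
  then have "sorted_wrt (\<ge>) (map f ys)"
    by (simp add: sorted_wrt_iff_nth_Suc_transp)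
  with ys(1) show thesis
    using that by (auto simp: S_def)
qed

lemma shared_conv_take:
  assumes "j \<le> length L"
  shows "shared L j = (\<Union>C\<in>set (take j L). fan_of C) \<inter> fan_of (L ! j)"
  using assms by (auto simp: shared_def nth_image[symmetric] atLeast0LessThan)

lemma adjacent_swap_nth:
  assumes "Suc j < length L" "p < length L"
  shows "L[j := L ! Suc j, Suc j := L ! j] ! p = L ! Transposition.transpose j (Suc j) p"
  using assms by (auto simp: Transposition.transpose_def nth_list_update)

lemma shared_adjacent_swap:
  assumes "Suc j < length L" "p < length L"
    and absorb: "fan_of (L ! j) \<inter> fan_of (L ! Suc j) \<subseteq> (\<Union>C\<in>set (take j L). fan_of C)"
  shows "shared (L[j := L ! Suc j, Suc j := L ! j]) p
           = shared L (Transposition.transpose j (Suc j) p)"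
proof -
  define L' where "L' = L[j := L ! Suc j, Suc j := L ! j]"
  have take_j: "take j L' = take j L"
    by (simp add: L'_def take_update_swap list_update_beyond)
  consider "p < j" | "p = j" | "p = Suc j" | "Suc j < p"
    by linarith
  then have "shared L' p = shared L (Transposition.transpose j (Suc j) p)"
  proof cases
    case 1
    then have "take p L' = take p L"
      by (simp add: L'_def take_update_swap list_update_beyond)
    with 1 assms(1,2) show ?thesis
      by (simp add: shared_conv_take adjacent_swap_nth L'_def)
  next
    case 2
    with assms show ?thesis
      using take_j by (auto simp: shared_conv_take adjacent_swap_nth L'_def take_Suc_conv_app_nth)
  next
    case 3
    have "take (Suc j) L' = take j L @ [L ! Suc j]"
      using assms(1) take_j by (simp add: take_Suc_conv_app_nth L'_def)
    with 3 assms show ?thesis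
      by (auto simp: shared_conv_take adjacent_swap_nth L'_def)
  next
    case 4
    then have "take p L' = (take p L)[j := take p L ! Suc j, Suc j := take p L ! j]"
      by (simp add: L'_def take_update_swap)
    also have "set \<dots> = set (take p L)"
      using 4 assms(2) by (intro set_swap) simp_all
    finally have "set (take p L') = set (take p L)" .
    with 4 assms(1,2) show ?thesis
      by (simp add: shared_conv_take adjacent_swap_nth L'_def)
  qed
  then show ?thesis
    by (simp add: L'_def)
qed

lemma rational_pointed_cone_imp_polyhedron: "rational_pointed_cone C \<Longrightarrow> polyhedron C"
  unfolding rational_pointed_cone_def by (auto simp: polyhedron_convex_cone_hull)

lemma facets_fan_bd_imp_facet_of:
  assumes "polyhedron C" "F \<in> facets (fan_bd C)"
  shows "F facet_of C"
proof -
  have F: "F face_of C" "F \<noteq> {}" "F \<noteq> C" "\<And>G. G \<in> fan_bd C \<Longrightarrow> F \<subseteq> G \<Longrightarrow> G = F"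
    using assms(2) by (auto simp: facets_def fan_bd_def cone_face_def)
  obtain G where G: "G facet_of C" "F \<subseteq> G"
    using face_of_polyhedron_subset_facet[OF assms(1) F(1-3)] by blast
  then have "G \<in> fan_bd C"
    by (auto simp: facet_of_def fan_bd_def cone_face_def)
  with G show ?thesis
    using F(4) by auto
qed

lemma is_shelling_imp_facet_ordering: "is_shelling k \<Sigma> L \<Longrightarrow> facet_ordering \<Sigma> L"
  by (cases k) auto

lemma facet_ordering_nth:
  "facet_ordering \<Sigma> L \<Longrightarrow> i < length L \<Longrightarrow> L ! i \<in> facets \<Sigma>"
  unfolding facet_ordering_def by (metis nth_mem)

lemma fan_of_inter_subset:
  assumes fan: "rational_pointed_fan \<Sigma>" and "A \<in> \<Sigma>" "B \<in> \<Sigma>" "C \<in> \<Sigma>" "A \<inter> B \<subseteq> C"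
  shows "fan_of A \<inter> fan_of B \<subseteq> fan_of C"
proof
  fix F
  assume "F \<in> fan_of A \<inter> fan_of B"
  then have F: "F face_of A" "F \<noteq> {}" "F \<subseteq> C \<inter> A"
    using assms(5) face_of_imp_subset by (fastforce simp: fan_of_def cone_face_def)+
  have "C \<inter> A face_of C"
    using fan assms(2,4) by (auto simp: rational_pointed_fan_def cone_face_def)
  moreover have "F face_of C \<inter> A"
    using F face_of_subset by blast
  ultimately show "F \<in> fan_of C"
    using F(2) face_of_trans by (auto simp: fan_of_def cone_face_def)
qed

definition attaches_by_shelling :: "(real ^ 'd) set \<Rightarrow> (real ^ 'd) set set \<Rightarrow> bool" where
  "attaches_by_shelling C S \<longleftrightarrow>
     (\<exists>k D r. is_shelling k (fan_bd C) D \<and> 1 \<le> r \<and> r \<le> length D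
              \<and> S \<noteq> {} \<and> S = (\<Union>l<r. fan_of (D ! l)))"

lemma nonpure_shelling_iff:
  "nonpure_shelling \<Sigma> L \<longleftrightarrow> facet_ordering \<Sigma> L \<and>
     (fan_dim \<Sigma> = 0 \<or>
      (L \<noteq> [] \<and> (\<exists>k D. is_shelling k (fan_bd (L ! 0)) D)
       \<and> (\<forall>j. 0 < j \<and> j < length L \<longrightarrow> attaches_by_shelling (L ! j) (shared L j))))"
  by (simp add: nonpure_shelling_def attaches_by_shelling_def)

lemma lower_dim_predecessor_inter_covered:
  assumes fan: "rational_pointed_fan \<Sigma>" and ord: "facet_ordering \<Sigma> L"
    and "p < q" "q < length L" and dim: "aff_dim (L ! p) < aff_dim (L ! q)"
    and att: "attaches_by_shelling (L ! q) (shared L q)"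
  obtains i where "i < q" "i \<noteq> p" "L ! p \<inter> L ! q \<subseteq> L ! i"
proof -
  define A B where "A = L ! p" and "B = L ! q"
  have A: "A \<in> facets \<Sigma>" and B: "B \<in> facets \<Sigma>"
    using facet_ordering_nth[OF ord] \<open>p < q\<close> \<open>q < length L\<close> by (simp_all add: A_def B_def)
  then have "A \<in> \<Sigma>" "B \<in> \<Sigma>"
    by (simp_all add: facets_def)
  have "A \<noteq> B"
    using ord \<open>p < q\<close> \<open>q < length L\<close>
    by (auto simp: A_def B_def facet_ordering_def nth_eq_iff_index_eq)
  with A B have "\<not> A \<subseteq> B"
    by (auto simp: facets_def)
  have "polyhedron A" "polyhedron B"
    using fan \<open>A \<in> \<Sigma>\<close> \<open>B \<in> \<Sigma>\<close> rational_pointed_cone_imp_polyhedron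
    by (auto simp: rational_pointed_fan_def)
  obtain k D r where D: "is_shelling k (fan_bd B) D" "r \<le> length D"
      "shared L q = (\<Union>l<r. fan_of (D ! l))"
    using att by (auto simp: attaches_by_shelling_def B_def)
  have "A \<inter> B \<in> fan_of A \<inter> fan_of B"
    using fan \<open>A \<in> \<Sigma>\<close> \<open>B \<in> \<Sigma>\<close> by (simp add: fan_of_def rational_pointed_fan_def)
  then have "A \<inter> B \<in> shared L q"
    using \<open>p < q\<close> unfolding shared_def A_def B_def by blast
  then obtain l where "l < r" and AB: "A \<inter> B \<in> fan_of (D ! l)"
    using D(3) by auto
  define G where "G = D ! l"
  have "G \<in> set D"
    using \<open>l < r\<close> D(2) by (simp add: G_def)
  then have "G facet_of B"
    using facets_fan_bd_imp_facet_of[OF \<open>polyhedron B\<close>] is_shelling_imp_facet_ordering[OF D(1)]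
    by (simp add: facet_ordering_def)
  then have G: "G face_of B" "G \<noteq> {}" "aff_dim G = aff_dim B - 1"
    by (auto simp: facet_of_def)
  have "G \<in> fan_of G"
    using G face_of_imp_convex face_of_refl by (auto simp: fan_of_def cone_face_def)
  then have "G \<in> shared L q"
    using D(3) \<open>l < r\<close> G_def by auto
  then obtain i where "i < q" and Gi: "G face_of L ! i"
    by (auto simp: shared_def fan_of_def cone_face_def)
  have "i \<noteq> p"
  proof
    assume "i = p"
    then have "G face_of A" "G \<noteq> A"
      using Gi G(1) \<open>\<not> A \<subseteq> B\<close> face_of_imp_subset by (auto simp: A_def)
    then have "aff_dim G < aff_dim A"
      using face_of_aff_dim_lt polyhedron_imp_convex[OF \<open>polyhedron A\<close>] by blast
    with G(3) dim show False
      by (simp add: A_def B_def)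
  qed
  moreover have "A \<inter> B \<subseteq> G" "G \<subseteq> L ! i"
    using AB Gi face_of_imp_subset by (auto simp: G_def fan_of_def cone_face_def)
  ultimately show thesis
    using that \<open>i < q\<close> by (simp add: A_def B_def)
qed

lemma nonpure_shelling_swap_ascent:
  assumes fan: "rational_pointed_fan \<Sigma>" and sh: "nonpure_shelling \<Sigma> L"
    and j: "Suc j < length L" and asc: "aff_dim (L ! j) < aff_dim (L ! Suc j)"
  shows "nonpure_shelling \<Sigma> (L[j := L ! Suc j, Suc j := L ! j])"
proof -
  define L' where "L' = L[j := L ! Suc j, Suc j := L ! j]"
  define \<tau> where "\<tau> = Transposition.transpose j (Suc j)"
  have ord: "facet_ordering \<Sigma> L"
    using sh by (simp add: nonpure_shelling_iff)
  with j have ord': "facet_ordering \<Sigma> L'"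
    by (simp add: L'_def facet_ordering_def)
  show ?thesis
  proof (cases "fan_dim \<Sigma> = 0")
    case True
    with ord' show ?thesis
      by (simp add: nonpure_shelling_iff L'_def)
  next
    case False
    then have first: "L \<noteq> []" "\<exists>k D. is_shelling k (fan_bd (L ! 0)) D"
      and att: "\<And>p. 0 < p \<Longrightarrow> p < length L \<Longrightarrow> attaches_by_shelling (L ! p) (shared L p)"
      using sh by (auto simp: nonpure_shelling_iff)
    obtain i where "i < j" and cover: "L ! j \<inter> L ! Suc j \<subseteq> L ! i"
      using lower_dim_predecessor_inter_covered[OF fan ord lessI j asc att[OF zero_less_Suc j]]
      by (metis less_SucE)
    have in_fan: "\<And>p. p < length L \<Longrightarrow> L ! p \<in> \<Sigma>"
      using facet_ordering_nth[OF ord] by (simp add: facets_def)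
    have "fan_of (L ! j) \<inter> fan_of (L ! Suc j) \<subseteq> fan_of (L ! i)"
      using fan_of_inter_subset[OF fan in_fan in_fan in_fan cover] j \<open>i < j\<close> by simp
    moreover have "L ! i \<in> set (take j L)"
      using j \<open>i < j\<close> by (auto simp: in_set_conv_nth)
    ultimately have shared: "\<And>p. p < length L \<Longrightarrow> shared L' p = shared L (\<tau> p)"
      using shared_adjacent_swap[OF j] by (fastforce simp: L'_def \<tau>_def)
    have nth: "\<And>p. p < length L \<Longrightarrow> L' ! p = L ! \<tau> p"
      using adjacent_swap_nth[OF j] by (simp add: L'_def \<tau>_def)
    have \<tau>: "\<tau> 0 = 0" "\<And>p. 0 < p \<Longrightarrow> p < length L \<Longrightarrow> 0 < \<tau> p \<and> \<tau> p < length L"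
      using j \<open>i < j\<close> by (auto simp: \<tau>_def Transposition.transpose_def)
    have "length L' = length L"
      by (simp add: L'_def)
    then have "nonpure_shelling \<Sigma> L'"
      unfolding nonpure_shelling_iff
      using ord' first att shared nth \<tau> by (metis length_greater_0_conv)
    then show ?thesis
      by (simp add: L'_def)
  qed
qed

lemma nonpure_shelling_sorted_by_dim:
  assumes "rational_pointed_fan \<Sigma>" "nonpure_shelling \<Sigma> L"
  obtains L' where "nonpure_shelling \<Sigma> L'" "mset L' = mset L" "sorted_wrt (\<ge>) (map aff_dim L')"
  using sortable_by_adjacent_swaps[of "nonpure_shelling \<Sigma>" L aff_dim]
    nonpure_shelling_swap_ascent[OF assms(1)] assms(2) by blast

theorem lemma3p3:
  fixes \<Sigma> :: "(real ^ 'd) set set" and L :: "(real ^ 'd) set list"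
  assumes "rational_pointed_fan \<Sigma>"
    and "nonpure_shellable \<Sigma>"
    and "nonpure_shelling \<Sigma> L"
  shows "\<exists>\<sigma>. \<sigma> permutes {..<length L}
           \<and> nonpure_shelling \<Sigma> (map (\<lambda>i. L ! \<sigma> i) [0..<length L])
           \<and> (\<forall>i j. i \<le> j \<and> j < length L \<longrightarrow> aff_dim (L ! \<sigma> j) \<le> aff_dim (L ! \<sigma> i))"
proof -
  obtain L' where L': "nonpure_shelling \<Sigma> L'" "mset L' = mset L" "sorted_wrt (\<ge>) (map aff_dim L')"
    using nonpure_shelling_sorted_by_dim[OF assms(1,3)] .
  obtain \<sigma> where \<sigma>: "\<sigma> permutes {..<length L}" "permute_list \<sigma> L = L'"
    using mset_eq_permutation[OF L'(2)] .
  then have L'_eq: "map (\<lambda>i. L ! \<sigma> i) [0..<length L] = L'"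
    by (simp add: permute_list_def)
  have "aff_dim (L' ! j) \<le> aff_dim (L' ! i)" if "i \<le> j" "j < length L'" for i j
    using that sorted_wrt_nth_less[OF L'(3), of i j] by (cases "i = j") simp_all
  with \<sigma>(1) L'(1) show ?thesis
    unfolding L'_eq[symmetric] by auto
qed

end
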